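(* Let $\alpha=(\alpha_\pi)_{\pi\in\mathcal P}$ and $\beta=(\beta_\pi)_{\pi\in\mathcal P}$ be admissible families of weights. Then $\alpha=\beta$ if and only if $\alpha_\sigma=\beta_\sigma$ for every partition $\sigma\in\mathcal P(\mathbf f)$ with exactly two blocks and $\mathbf f\in\mathcal F^n$, $n\le 4$.
   Context: Fix a finite set $\mathcal F$ of faces. For a word $\mathbf f\in\mathcal F^n$ ($n\ge1$), $[n]_{\mathbf f}$ is $\{1,\dots,n\}$ with faces $\ell\mapsto\mathbf f(\ell)$ (elements are called legs); $\mathcal P(\mathbf f)$ is the set of set partitions of $[n]$, viewed with these faces, and $\mathcal P=\bigcup_{\mathbf f}\mathcal P(\mathbf f)$. A finite totally ordered set $S$ with a face map is identified with $[m]_{|S|}$ through the order-preserving bijection ($|S|$ = word of faces read in order), so partitions of such sets are elements of $\mathcal P$. $1_{\mathbf f}$ is the one-block partition. For blocks $\beta_1\ne\beta_2$ of $\pi$, $\pi_{\beta_1\smile\beta_2}=(\pi\setminus\{\beta_1,\beta_2\})\cup\{\beta_1\cup\beta_2\}$, and $\{\beta_1,\beta_2\}$ is regarded as a partition of the multi-faced set $\beta_1\cup\beta_2$. Reduction: for $\pi\in\mathcal P(\mathbf f)$ let $s\sim t$ ($s\le t$) iff all $r\in[s,t]$ have the same face and lie in the same block; $\pi_{\mathrm{red}}$ is the induced partition of the quotient $[n]/\sim$ (classes are intervals, ordered naturally, with their common face). Mirror: $\overline{\mathbf f}(i)=\mathbf f(n+1-i)$, $\overline\pi=\{\{n+1-i:i\in\beta\}:\beta\in\pi\}\in\mathcal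 P(\overline{\mathbf f})$. A family $\alpha=(\alpha_\pi)_{\pi\in\mathcal P}$ of complex numbers is admissible if: (i) $\alpha_{1_{\mathbf f}}=1$ for all $\mathbf f$; (ii) $\alpha_{\{\{1\},\{2\}\}}=1$ for every $\mathbf f\in\mathcal F^2$; (iii) $\alpha_\pi=\alpha_{\pi_{\mathrm{red}}}$; (iv) if $\pi\in\mathcal P(\mathbf f)$ has blocks $\beta_1\ne\beta_2$ with $i\in\beta_1$, $i+1\in\beta_2$, $\mathbf f(i)=\mathbf f(i+1)$, then $\alpha_\pi=\alpha_{\pi_{\beta_1\smile\beta_2}}\alpha_{\{\beta_1,\beta_2\}}$; (v) $\alpha_\pi=\alpha_\sigma$ whenever $\pi\in\mathcal P(\mathbf f)$, $\sigma\in\mathcal P(\mathbf g)$ have the same underlying set partition of $[n]$ and $\mathbf f(\ell)=\mathbf g(\ell)$ for $1<\ell<n$; (vi) $\alpha_{\overline\pi}=\overline{\alpha_\pi}$. *)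

theory Defs
  imports Complex_Main "HOL-Library.Disjoint_Sets"
begin

text \<open>A word f in F^n is a list of length n; leg l (1 \<le> l \<le> n)
has face f ! (l - 1). A partition in P(f) is a set partition of {1..length f}, n \<ge> 1.
A family of weights is a function on words and set partitions; only its values on P matter.\<close>

definition face :: "'f list \<Rightarrow> nat \<Rightarrow> 'f" where
  "face f l = f ! (l - 1)"

definition inP :: "'f list \<Rightarrow> nat set set \<Rightarrow> bool" where
  "inP f \<pi> \<longleftrightarrow> length f \<ge> 1 \<and> partition_on {1..length f} \<pi>"

text \<open>Identification of a finite totally ordered set S of legs (with faces from f) with
[m]_{|S|} via the order-preserving bijection l \<mapsto> card {x \<in> S. x \<le> l}.\<close>

definition std_word :: "'f list \<Rightarrow> nat set \<Rightarrow> 'f list" where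
  "std_word f S = map (face f) (sorted_list_of_set S)"

definition std_part :: "nat set \<Rightarrow> nat set set \<Rightarrow> nat set set" where
  "std_part S \<rho> = (\<lambda>B. (\<lambda>l. card {x \<in> S. x \<le> l}) ` B) ` \<rho>"

definition merge :: "nat set set \<Rightarrow> nat set \<Rightarrow> nat set \<Rightarrow> nat set set" where
  "merge \<pi> b1 b2 = (\<pi> - {b1, b2}) \<union> {b1 \<union> b2}"

definition same_block :: "nat set set \<Rightarrow> nat \<Rightarrow> nat \<Rightarrow> bool" where
  "same_block \<pi> r s \<longleftrightarrow> (\<exists>B\<in>\<pi>. r \<in> B \<and> s \<in> B)"

definition red_sim :: "'f list \<Rightarrow> nat set set \<Rightarrow> nat \<Rightarrow> nat \<Rightarrow> bool" where
  "red_sim f \<pi> s t \<longleftrightarrow> s \<le> t \<and> (\<forall>r\<in>{s..t}. face f r = face f s \<and> same_block \<pi> r s)"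

text \<open>The equivalence classes are intervals; each class is represented by its least element.
The quotient [n]/\<sim>, ordered naturally with the common faces, is thus identified with the set
of class minima, and the induced partition is the restriction of \<pi> to it.\<close>
definition red_reps :: "'f list \<Rightarrow> nat set set \<Rightarrow> nat set" where
  "red_reps f \<pi> = {t \<in> {1..length f}. \<not> (\<exists>s<t. red_sim f \<pi> s t)}"

definition restrict_part :: "nat set set \<Rightarrow> nat set \<Rightarrow> nat set set" where
  "restrict_part \<pi> S = {B \<inter> S | B. B \<in> \<pi> \<and> B \<inter> S \<noteq> {}}"

definition red_word :: "'f list \<Rightarrow> nat set set \<Rightarrow> 'f list" where
  "red_word f \<pi> = std_word f (red_reps f \<pi>)"

definition red_part :: "'f list \<Rightarrow> nat set set \<Rightarrow> nat set set" where
  "red_part f \<pi> = std_part (red_reps f \<pi>) (restrict_part \<pi> (red_reps f \<pi>))"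

definition mirror_part :: "nat \<Rightarrow> nat set set \<Rightarrow> nat set set" where
  "mirror_part n \<pi> = (\<lambda>B. (\<lambda>i. n + 1 - i) ` B) ` \<pi>"

definition admissible :: "('f::finite list \<Rightarrow> nat set set \<Rightarrow> complex) \<Rightarrow> bool" where
  "admissible \<alpha> \<longleftrightarrow>
     (\<forall>f. length f \<ge> 1 \<longrightarrow> \<alpha> f {{1..length f}} = 1)
   \<and> (\<forall>f. length f = 2 \<longrightarrow> \<alpha> f {{1},{2}} = 1)
   \<and> (\<forall>f \<pi>. inP f \<pi> \<longrightarrow> \<alpha> f \<pi> = \<alpha> (red_word f \<pi>) (red_part f \<pi>))
   \<and> (\<forall>f \<pi> b1 b2 i. inP f \<pi> \<and> b1 \<in> \<pi> \<and> b2 \<in> \<pi> \<and> b1 \<noteq> b2 \<and> i \<in> b1 \<and> Suc i \<in> b2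
        \<and> face f i = face f (Suc i) \<longrightarrow>
        \<alpha> f \<pi> = \<alpha> f (merge \<pi> b1 b2)
                 * \<alpha> (std_word f (b1 \<union> b2)) (std_part (b1 \<union> b2) {b1, b2}))
   \<and> (\<forall>f g \<pi>. inP f \<pi> \<and> length g = length f
        \<and> (\<forall>l. 1 < l \<and> l < length f \<longrightarrow> face f l = face g l) \<longrightarrow> \<alpha> f \<pi> = \<alpha> g \<pi>)
   \<and> (\<forall>f \<pi>. inP f \<pi> \<longrightarrow> \<alpha> (rev f) (mirror_part (length f) \<pi>) = cnj (\<alpha> f \<pi>))"

end

theory Submission
  imports Defs
begin

text \<open>Every weight is, uniformly in the admissible family, a product of weights on fewer legs
  or on as many legs with fewer blocks, until only two-block partitions on at most four legs remain.
  Only interior faces matter, so an end leg may take the face of its neighbour; if it also lies in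
  the neighbour's block, the reduction rule deletes it. If legs 1 and 2 lie in different blocks, the
  merge rule yields a partition with one block less and a pair of blocks, which lives on fewer legs
  unless there are just two blocks. In that last case, on at least five legs, double leg 3 and cut
  its block between the two copies: this does not change the weight, because a pair of blocks one
  of which precedes the other has weight 1. Merging the blocks of legs 1 and 2 now produces a
  partition whose first three legs share a block, so two legs can be deleted, and a pair of blocks
  that misses the at least two legs of the third block.\<close>

section \<open>Set partitions of legs\<close>

lemma inP_finite: "inP f \<pi> \<Longrightarrow> finite \<pi>"
  unfolding inP_def by (meson finite_atLeastAtMost finite_elements)

lemma inP_block_subset: "inP f \<pi> \<Longrightarrow> B \<in> \<pi> \<Longrightarrow> B \<subseteq> {1..length f}"
  unfolding inP_def partition_on_def by auto

lemma inP_ex_block: "inP f \<pi> \<Longrightarrow> x \<in> {1..length f} \<Longrightarrow> \<exists>B\<in>\<pi>. x \<in> B"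
  unfolding inP_def partition_on_def by auto

lemma inP_block_unique: "inP f \<pi> \<Longrightarrow> B \<in> \<pi> \<Longrightarrow> B' \<in> \<pi> \<Longrightarrow> x \<in> B \<Longrightarrow> x \<in> B' \<Longrightarrow> B = B'"
  unfolding inP_def partition_on_def disjoint_def by blast

lemma inP_block_nonempty: "inP f \<pi> \<Longrightarrow> B \<in> \<pi> \<Longrightarrow> B \<noteq> {}"
  unfolding inP_def partition_on_def by auto

lemma inP_cong_length: "length g = length f \<Longrightarrow> inP g \<pi> \<longleftrightarrow> inP f \<pi>"
  unfolding inP_def by simp

lemma card_inP_le_length:
  assumes "inP f \<pi>"
  shows "card \<pi> \<le> length f"
proof -
  have fin: "finite B" if "B \<in> \<pi>" for B
    using inP_block_subset[OF assms that] finite_subset by blast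
  have "card \<pi> = (\<Sum>B\<in>\<pi>. 1)" by simp
  also have "\<dots> \<le> (\<Sum>B\<in>\<pi>. card B)"
    using inP_block_nonempty[OF assms] fin by (intro sum_mono) (simp add: Suc_leI card_gt_0_iff)
  also have "\<dots> = length f"
    using product_partition[of "{1..length f}" \<pi>] assms fin unfolding inP_def by simp
  finally show ?thesis .
qed

lemma card_inP_pos: "inP f \<pi> \<Longrightarrow> 0 < card \<pi>"
  using inP_finite inP_ex_block[of f \<pi> 1] unfolding inP_def by (auto simp: card_gt_0_iff)

lemma inP_card_one: "inP f \<pi> \<Longrightarrow> card \<pi> = 1 \<Longrightarrow> \<pi> = {{1..length f}}"
  unfolding inP_def partition_on_def by (metis card_1_singletonE ccpo_Sup_singleton)

lemma card_Un_blocks_add_le: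
  assumes "inP f \<pi>" "X \<in> \<pi>" "Y \<in> \<pi>" "D \<in> \<pi>" "D \<noteq> X" "D \<noteq> Y"
  shows "card (X \<union> Y) + card D \<le> length f"
proof -
  have "X \<union> Y \<union> D \<subseteq> {1..length f}"
    using inP_block_subset[OF assms(1)] assms(2-4) by blast
  moreover have "(X \<union> Y) \<inter> D = {}"
    using inP_block_unique[OF assms(1)] assms(2-6) by blast
  ultimately show ?thesis
    by (metis card_Un_disjoint card_atLeastAtMost card_mono diff_Suc_1 finite_Un finite_atLeastAtMost
        finite_subset)
qed

lemma card_Un_two_blocks_less:
  assumes "inP f \<pi>" "3 \<le> card \<pi>" "X \<in> \<pi>" "Y \<in> \<pi>"
  shows "card (X \<union> Y) < length f"
proof -
  have "card {X, Y} < card \<pi>"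
    using assms(2) by (simp add: card_insert_if)
  then have "\<not> \<pi> \<subseteq> {X, Y}"
    using card_mono[of "{X, Y}" \<pi>] by auto
  then obtain D where "D \<in> \<pi>" "D \<noteq> X" "D \<noteq> Y"
    by blast
  moreover from this have "card D \<noteq> 0"
    using inP_block_nonempty[OF assms(1)] inP_block_subset[OF assms(1)]
    by (meson card_0_eq finite_atLeastAtMost finite_subset)
  ultimately show ?thesis
    using card_Un_blocks_add_le[OF assms(1,3,4)] by fastforce
qed

lemma same_blockI: "B \<in> \<pi> \<Longrightarrow> x \<in> B \<Longrightarrow> y \<in> B \<Longrightarrow> same_block \<pi> x y"
  unfolding same_block_def by blast

lemma same_block_refl: "inP f \<pi> \<Longrightarrow> x \<in> {1..length f} \<Longrightarrow> same_block \<pi> x x"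
  unfolding same_block_def using inP_ex_block by blast

lemma same_block_sym: "same_block \<pi> x y \<Longrightarrow> same_block \<pi> y x"
  unfolding same_block_def by blast

lemma same_block_trans: "inP f \<pi> \<Longrightarrow> same_block \<pi> x y \<Longrightarrow> same_block \<pi> y z \<Longrightarrow> same_block \<pi> x z"
  unfolding same_block_def using inP_block_unique by metis

lemma inP_merge:
  assumes "inP f \<pi>" "B \<in> \<pi>" "C \<in> \<pi>"
  shows "inP f (merge \<pi> B C)"
proof -
  have "partition_on {1..length f} (merge \<pi> B C)"
  proof (rule partition_onI)
    show "\<Union>(merge \<pi> B C) = {1..length f}"
      using assms unfolding inP_def partition_on_def merge_def by blast
    show "{} \<notin> merge \<pi> B C"
      using inP_block_nonempty[OF assms(1)] assms(2) unfolding merge_def by auto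
    show "disjnt D E" if "D \<in> merge \<pi> B C" "E \<in> merge \<pi> B C" "D \<noteq> E" for D E
      using that assms inP_block_unique[OF assms(1)] unfolding merge_def disjnt_def by blast
  qed
  then show ?thesis using assms(1) unfolding inP_def by simp
qed

lemma card_merge:
  assumes "inP f \<pi>" "B \<in> \<pi>" "C \<in> \<pi>" "B \<noteq> C"
  shows "card (merge \<pi> B C) = card \<pi> - 1"
proof -
  have "B \<union> C \<notin> \<pi> - {B, C}"
    using assms inP_block_nonempty[OF assms(1,2)] inP_block_unique[OF assms(1)] by blast
  moreover have "2 \<le> card \<pi>"
    using card_mono[OF inP_finite[OF assms(1)], of "{B, C}"] assms(2-4) by simp
  ultimately show ?thesis
    using inP_finite[OF assms(1)] assms(2-4) unfolding merge_def by (simp add: card_Diff_subset)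
qed

lemma partition_on_shrink_block:
  assumes "partition_on A P" "Z \<in> P" "Z' \<subseteq> Z" "Z - Z' \<noteq> {}"
  shows "partition_on (A - Z') (insert (Z - Z') (P - {Z}))"
proof -
  have disj: "D \<inter> E = {}" if "D \<in> P" "E \<in> P" "D \<noteq> E" for D E
    using partition_onD2[OF assms(1)] that by (auto simp: disjoint_def)
  show ?thesis
  proof (rule partition_onI)
    have "\<Union>(P - {Z}) \<inter> Z' = {}"
      using disj[OF _ assms(2)] assms(3) by blast
    then show "\<Union>(insert (Z - Z') (P - {Z})) = A - Z'"
      using partition_onD1[OF assms(1)] assms(2) by blast
    show "disjnt D E" if "D \<in> insert (Z - Z') (P - {Z})" "E \<in> insert (Z - Z') (P - {Z})" "D \<noteq> E" for D E
      using that disj assms(2) unfolding disjnt_def by blast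
    show "{} \<notin> insert (Z - Z') (P - {Z})"
      using partition_onD3[OF assms(1)] assms(4) by blast
  qed
qed

lemma partition_on_insert_image:
  assumes "partition_on A P" "inj f" "disjnt C (f ` A)" "C \<noteq> {}"
  shows "partition_on (C \<union> f ` A) (insert C ((`) f ` P))"
proof -
  have "partition_on (f ` A) ((`) f ` P - {{}})"
    using partition_on_inj_image[OF assms(1)] assms(2) inj_on_subset by blast
  moreover have "(`) f ` P - {{}} = (`) f ` P"
    using partition_onD3[OF assms(1)] by auto
  moreover have "C \<union> f ` A - C = f ` A" "\<Union>((`) f ` P) = f ` A"
    using assms(3) partition_onD1[OF assms(1)] unfolding disjnt_def by auto
  ultimately show ?thesis
    using partition_on_insert[of C "(`) f ` P" "C \<union> f ` A"] assms(3,4) by simp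
qed

definition rank :: "nat set \<Rightarrow> nat \<Rightarrow> nat" where
  "rank S l = card {x \<in> S. x \<le> l}"

lemma std_part_eq_rank_image: "std_part S \<rho> = (`) (rank S) ` \<rho>"
  unfolding std_part_def rank_def ..

lemma rank_less:
  assumes "finite S" "y \<in> S" "x < y"
  shows "rank S x < rank S y"
proof -
  have "{z \<in> S. z \<le> x} \<subseteq> {z \<in> S. z \<le> y}"
    using assms(3) by auto
  moreover have "y \<in> {z \<in> S. z \<le> y} - {z \<in> S. z \<le> x}"
    using assms(2,3) by auto
  ultimately have "{z \<in> S. z \<le> x} \<subset> {z \<in> S. z \<le> y}"
    by blast
  then show ?thesis unfolding rank_def using assms(1) by (simp add: psubset_card_mono)
qed

lemma inj_on_rank: "finite S \<Longrightarrow> inj_on (rank S) S"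
  by (rule inj_onI) (metis linorder_neqE_nat less_irrefl rank_less)

lemma rank_image: "finite S \<Longrightarrow> rank S ` S = {1..card S}"
proof -
  assume fin: "finite S"
  have "rank S x \<in> {1..card S}" if "x \<in> S" for x
    unfolding rank_def using fin that by (auto intro: card_mono simp: Suc_le_eq card_gt_0_iff)
  then have "rank S ` S \<subseteq> {1..card S}" by blast
  moreover have "card (rank S ` S) = card {1..card S}"
    using card_image[OF inj_on_rank[OF fin]] by simp
  ultimately show ?thesis by (simp add: card_subset_eq)
qed

lemma length_std_word [simp]: "length (std_word f S) = card S"
  unfolding std_word_def by simp

lemma inP_std_part:
  assumes "finite S" "S \<noteq> {}" "partition_on S \<rho>"
  shows "inP (std_word f S) (std_part S \<rho>)"
proof -
  have "partition_on (rank S ` S) ((`) (rank S) ` \<rho> - {{}})"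
    by (rule partition_on_inj_image[OF assms(3) inj_on_rank[OF assms(1)]])
  moreover have "{} \<notin> (`) (rank S) ` \<rho>"
    using partition_onD3[OF assms(3)] by auto
  ultimately show ?thesis
    unfolding inP_def std_part_eq_rank_image rank_image[OF assms(1)]
    using assms(1,2) by (simp add: Suc_le_eq card_gt_0_iff)
qed

lemma card_std_part:
  assumes "finite S" "partition_on S \<rho>"
  shows "card (std_part S \<rho>) = card \<rho>"
proof -
  have "\<rho> \<subseteq> Pow S" using partition_onD1[OF assms(2)] by auto
  then have "inj_on ((`) (rank S)) \<rho>"
    using inj_on_image_Pow[OF inj_on_rank[OF assms(1)]] inj_on_subset by blast
  then show ?thesis unfolding std_part_eq_rank_image by (rule card_image)
qed

lemma partition_on_pair_of_blocks:
  assumes "inP f \<pi>" "B \<in> \<pi>" "C \<in> \<pi>" "B \<noteq> C"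
  shows "partition_on (B \<union> C) {B, C}"
  using assms inP_block_nonempty[OF assms(1)] inP_block_unique[OF assms(1)]
  by (intro partition_onI) (auto simp: disjnt_def)

lemma inP_std_pair_of_blocks:
  assumes "inP f \<pi>" "B \<in> \<pi>" "C \<in> \<pi>" "B \<noteq> C"
  shows "inP (std_word f (B \<union> C)) (std_part (B \<union> C) {B, C})"
proof (rule inP_std_part)
  show "finite (B \<union> C)"
    using inP_block_subset[OF assms(1)] assms(2,3) by (meson finite_Un finite_atLeastAtMost finite_subset)
  show "B \<union> C \<noteq> {}" using inP_block_nonempty[OF assms(1,2)] by simp
qed (rule partition_on_pair_of_blocks[OF assms])

lemma admissible_one_block: "admissible \<alpha> \<Longrightarrow> 1 \<le> length f \<Longrightarrow> \<alpha> f {{1..length f}} = 1"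
  unfolding admissible_def by (elim conjE) (erule allE, erule mp, assumption)

lemma admissible_two_singletons: "admissible \<alpha> \<Longrightarrow> length f = 2 \<Longrightarrow> \<alpha> f {{1}, {2}} = 1"
  unfolding admissible_def by (elim conjE) (erule allE, erule mp, assumption)

lemma admissible_reduce: "admissible \<alpha> \<Longrightarrow> inP f \<pi> \<Longrightarrow> \<alpha> f \<pi> = \<alpha> (red_word f \<pi>) (red_part f \<pi>)"
  unfolding admissible_def by (elim conjE) (erule allE, erule allE, erule mp, assumption)

lemma admissible_merge:
  "admissible \<alpha> \<Longrightarrow> inP f \<pi> \<Longrightarrow> b1 \<in> \<pi> \<Longrightarrow> b2 \<in> \<pi> \<Longrightarrow> b1 \<noteq> b2 \<Longrightarrow> i \<in> b1 \<Longrightarrow> Suc i \<in> b2 \<Longrightarrow>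
   face f i = face f (Suc i) \<Longrightarrow>
   \<alpha> f \<pi> = \<alpha> f (merge \<pi> b1 b2) * \<alpha> (std_word f (b1 \<union> b2)) (std_part (b1 \<union> b2) {b1, b2})"
  unfolding admissible_def by (elim conjE) ((erule allE)+, erule mp, simp)

lemma admissible_interior_faces:
  "admissible \<alpha> \<Longrightarrow> inP f \<pi> \<Longrightarrow> length g = length f \<Longrightarrow>
   (\<And>l. 1 < l \<Longrightarrow> l < length f \<Longrightarrow> face f l = face g l) \<Longrightarrow> \<alpha> f \<pi> = \<alpha> g \<pi>"
  unfolding admissible_def by (elim conjE) ((erule allE)+, erule mp, simp)

lemma admissible_update_first_face: "admissible \<alpha> \<Longrightarrow> inP w \<pi> \<Longrightarrow> \<alpha> (w[0 := x]) \<pi> = \<alpha> w \<pi>"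
  by (rule admissible_interior_faces[symmetric]) (auto simp: face_def)

lemma admissible_update_last_face:
  "admissible \<alpha> \<Longrightarrow> inP w \<pi> \<Longrightarrow> \<alpha> (w[length w - 1 := x]) \<pi> = \<alpha> w \<pi>"
  by (rule admissible_interior_faces[symmetric]) (auto simp: face_def)

section \<open>Deleting a repeated leg\<close>

text \<open>The classes of \<open>\<sim>\<close> are intervals, so a leg is the least element of its class
  iff it does not repeat its predecessor.\<close>

definition repeats :: "'f list \<Rightarrow> nat set set \<Rightarrow> nat \<Rightarrow> bool" where
  "repeats f \<pi> t \<longleftrightarrow> 2 \<le> t \<and> face f (t - 1) = face f t \<and> same_block \<pi> (t - 1) t"

lemma red_sim_imp_repeats:
  assumes "inP f \<pi>" "s < t" "red_sim f \<pi> s t"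
  shows "repeats f \<pi> t"
proof -
  have "s \<in> {s..t}" "t - 1 \<in> {s..t}" "t \<in> {s..t}"
    using assms(2) by auto
  then have "same_block \<pi> s s" and fb1: "face f (t - 1) = face f s" "same_block \<pi> (t - 1) s"
    and fb2: "face f t = face f s" "same_block \<pi> t s"
    using assms(3) unfolding red_sim_def by blast+
  from \<open>same_block \<pi> s s\<close> have "1 \<le> s"
    using inP_block_subset[OF assms(1)] unfolding same_block_def by fastforce
  then show ?thesis
    unfolding repeats_def using assms(2) fb1(1) fb2(1)
      same_block_trans[OF assms(1) fb1(2) same_block_sym[OF fb2(2)]] by simp
qed

lemma repeats_imp_red_sim:
  assumes "inP f \<pi>" "t \<le> length f" "repeats f \<pi> t"
  shows "red_sim f \<pi> (t - 1) t"
proof -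
  have t: "2 \<le> t" "face f t = face f (t - 1)" "same_block \<pi> t (t - 1)"
    using assms(3) same_block_sym[of \<pi> "t - 1" t] unfolding repeats_def by auto
  have "t - 1 \<in> {1..length f}"
    using t(1) assms(2) by auto
  note refl = same_block_refl[OF assms(1) this]
  have interval: "face f r = face f (t - 1) \<and> same_block \<pi> r (t - 1)" if "r \<in> {t - 1..t}" for r
  proof -
    have "r = t - 1 \<or> r = t" using that by auto
    then show ?thesis using t(2,3) refl by auto
  qed
  show ?thesis
    unfolding red_sim_def by (intro conjI diff_le_self ballI interval)
qed

lemma red_reps_eq:
  assumes "inP f \<pi>"
  shows "red_reps f \<pi> = {t \<in> {1..length f}. \<not> repeats f \<pi> t}"
proof -
  have "(\<exists>s<t. red_sim f \<pi> s t) \<longleftrightarrow> repeats f \<pi> t" if "t \<le> length f" for t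
  proof
    assume "\<exists>s<t. red_sim f \<pi> s t"
    then show "repeats f \<pi> t"
      using red_sim_imp_repeats[OF assms] by blast
  next
    assume "repeats f \<pi> t"
    moreover from this have "t - 1 < t"
      unfolding repeats_def by simp
    ultimately show "\<exists>s<t. red_sim f \<pi> s t"
      using repeats_imp_red_sim[OF assms that] by blast
  qed
  then show ?thesis
    unfolding red_reps_def by auto
qed

definition shift :: "nat \<Rightarrow> nat \<Rightarrow> nat" where
  "shift p x = (if x \<le> p then x else Suc x)"

lemma shift_eq_iff [simp]: "shift p x = shift p y \<longleftrightarrow> x = y"
  unfolding shift_def by auto

lemma shift_less_iff [simp]: "shift p x < shift p y \<longleftrightarrow> x < y"
  unfolding shift_def by auto

lemma shift_le_iff [simp]: "shift p x \<le> shift p y \<longleftrightarrow> x \<le> y"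
  unfolding shift_def by auto

lemma shift_neq_Suc [simp]: "shift p x \<noteq> Suc p" "Suc p \<noteq> shift p x"
  unfolding shift_def by auto

lemma shift_fixes [simp]: "x \<le> p \<Longrightarrow> shift p x = x"
  unfolding shift_def by simp

lemma inj_shift: "inj (shift p)"
  by (rule injI) simp

lemma strict_mono_on_shift: "strict_mono_on A (shift p)"
  by (rule strict_mono_onI) simp

lemma range_shift: "range (shift p) = - {Suc p}"
proof (intro equalityI subsetI)
  fix x assume "x \<in> - {Suc p}"
  then have "x = shift p (if x \<le> p then x else x - 1)"
    unfolding shift_def by auto
  then show "x \<in> range (shift p)" by (rule range_eqI)
qed auto

lemma vimage_shift_atLeastAtMost: "p \<le> n \<Longrightarrow> shift p -` {1..Suc n} = {1..n}"
  unfolding shift_def by (auto split: if_splits)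

lemma shift_image_atLeastAtMost:
  assumes "p \<le> n"
  shows "shift p ` {1..n} = {1..Suc n} - {Suc p}"
proof -
  have "shift p ` {1..n} = shift p ` (shift p -` {1..Suc n})"
    using vimage_shift_atLeastAtMost[OF assms] by simp
  also have "\<dots> = {1..Suc n} \<inter> range (shift p)"
    by (rule image_vimage_eq)
  finally show ?thesis by (auto simp: range_shift)
qed

lemma shift_image_atMost: "shift p ` (A \<inter> {..p}) = A \<inter> {..p}"
  by (auto simp: image_iff)

lemma sorted_list_of_set_image:
  assumes "finite A" "strict_mono_on A f"
  shows "sorted_list_of_set (f ` A) = map f (sorted_list_of_set A)"
proof (rule strict_sorted_equal)
  have "sorted_wrt (\<lambda>x y. f x < f y) (sorted_list_of_set A)"
    using sorted_wrt_mono_rel[OF _ strict_sorted_list_of_set[of A]] assms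
    by (metis (no_types, lifting) set_sorted_list_of_set strict_mono_onD)
  then show "sorted_wrt (<) (map f (sorted_list_of_set A))"
    by (simp add: sorted_wrt_map)
qed (use assms in auto)

text \<open>\<open>del_leg w p\<close> and \<open>del_leg_part p \<pi>\<close> delete leg \<open>Suc p\<close>, which is list index \<open>p\<close>,
  and renumber the legs behind it.\<close>

definition del_leg :: "'a list \<Rightarrow> nat \<Rightarrow> 'a list" where
  "del_leg w p = take p w @ drop (Suc p) w"

definition del_leg_part :: "nat \<Rightarrow> nat set set \<Rightarrow> nat set set" where
  "del_leg_part p \<pi> = (\<lambda>B. shift p -` B) ` \<pi>"

lemma length_del_leg [simp]: "p < length w \<Longrightarrow> length (del_leg w p) = length w - 1"
  unfolding del_leg_def by simp

lemma face_del_leg: "p < length w \<Longrightarrow> 1 \<le> x \<Longrightarrow> face (del_leg w p) x = face w (shift p x)"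
  unfolding face_def del_leg_def shift_def by (auto simp: nth_append min_def)

lemma same_block_del_leg_part:
  "same_block (del_leg_part p \<pi>) x y \<longleftrightarrow> same_block \<pi> (shift p x) (shift p y)"
  unfolding same_block_def del_leg_part_def by auto

lemma
  assumes "inP w \<pi>" "1 \<le> p" "Suc p \<le> length w" "same_block \<pi> p (Suc p)"
  shows inP_del_leg_part: "inP (del_leg w p) (del_leg_part p \<pi>)"
    and card_del_leg_part: "card (del_leg_part p \<pi>) = card \<pi>"
proof -
  have nonempty: "shift p -` B \<noteq> {}" if B: "B \<in> \<pi>" for B
  proof -
    obtain x where "x \<in> B" using inP_block_nonempty[OF assms(1) B] by blast
    show ?thesis
    proof (cases "x = Suc p")
      case True
      then have "p \<in> B"
        using assms(4) \<open>x \<in> B\<close> B inP_block_unique[OF assms(1)] unfolding same_block_def by blast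
      then have "p \<in> shift p -` B"
        by simp
      then show ?thesis by blast
    next
      case False
      then have "x \<in> range (shift p)" by (simp add: range_shift)
      then show ?thesis using \<open>x \<in> B\<close> by blast
    qed
  qed
  have "partition_on (shift p -` {1..length w}) (del_leg_part p \<pi> - {{}})"
    using partition_on_vimage[of "{1..length w}" \<pi> "shift p"] assms(1)
    unfolding inP_def del_leg_part_def by simp
  moreover have "shift p -` {1..length w} = {1..length w - 1}"
  proof -
    have "p \<le> length w - 1" "Suc (length w - 1) = length w"
      using assms(3) by auto
    then show ?thesis using vimage_shift_atLeastAtMost[of p "length w - 1"] by metis
  qed
  moreover have "{} \<notin> del_leg_part p \<pi>"
    using nonempty unfolding del_leg_part_def by auto
  ultimately show "inP (del_leg w p) (del_leg_part p \<pi>)"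
    unfolding inP_def using assms(2,3) by simp
  have "inj_on (\<lambda>B. shift p -` B) \<pi>"
  proof (rule inj_onI)
    fix B C assume "B \<in> \<pi>" "C \<in> \<pi>" "shift p -` B = shift p -` C"
    then obtain x where "shift p x \<in> B" "shift p x \<in> C"
      using nonempty by blast
    then show "B = C" using inP_block_unique[OF assms(1) \<open>B \<in> \<pi>\<close> \<open>C \<in> \<pi>\<close>] by blast
  qed
  then show "card (del_leg_part p \<pi>) = card \<pi>"
    unfolding del_leg_part_def by (rule card_image)
qed

lemma repeats_del_leg:
  assumes "inP w \<pi>" "1 \<le> p" "Suc p \<le> length w" "face w p = face w (Suc p)"
    "same_block \<pi> p (Suc p)" and x: "1 \<le> x"
  shows "repeats (del_leg w p) (del_leg_part p \<pi>) x \<longleftrightarrow> repeats w \<pi> (shift p x)"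
proof -
  have face: "face (del_leg w p) y = face w (shift p y)" if "1 \<le> y" for y
    using face_del_leg[of p w y] assms(3) that by simp
  have "repeats (del_leg w p) (del_leg_part p \<pi>) x \<longleftrightarrow>
      2 \<le> x \<and> face w (shift p (x - 1)) = face w (shift p x) \<and>
      same_block \<pi> (shift p (x - 1)) (shift p x)"
    unfolding repeats_def same_block_del_leg_part using face[of x] face[of "x - 1"] x by auto
  also have "\<dots> \<longleftrightarrow> repeats w \<pi> (shift p x)"
  proof (cases "x = Suc p")
    case True
    have "same_block \<pi> p (Suc (Suc p)) \<longleftrightarrow> same_block \<pi> (Suc p) (Suc (Suc p))"
      using same_block_trans[OF assms(1)] same_block_sym assms(5) by metis
    then show ?thesis
      unfolding repeats_def using True assms(2,4) by (simp add: shift_def)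
  next
    case False
    then have "shift p (x - 1) = shift p x - 1" "2 \<le> x \<longleftrightarrow> 2 \<le> shift p x"
      using x assms(2) by (auto simp: shift_def)
    then show ?thesis unfolding repeats_def by simp
  qed
  finally show ?thesis .
qed

lemma red_reps_del_leg:
  assumes "inP w \<pi>" "1 \<le> p" "Suc p \<le> length w" "face w p = face w (Suc p)"
    "same_block \<pi> p (Suc p)"
  shows "red_reps w \<pi> = shift p ` red_reps (del_leg w p) (del_leg_part p \<pi>)"
proof -
  let ?n = "length w - 1"
  have "repeats w \<pi> (Suc p)"
    unfolding repeats_def using assms(2,4,5) by simp
  moreover have "shift p ` {1..?n} = {1..Suc ?n} - {Suc p}"
    by (rule shift_image_atLeastAtMost) (use assms(3) in simp)
  ultimately have "red_reps w \<pi> = {t \<in> shift p ` {1..?n}. \<not> repeats w \<pi> t}"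
    unfolding red_reps_eq[OF assms(1)] using assms(3) by auto
  also have "\<dots> = shift p ` {x \<in> {1..?n}. \<not> repeats w \<pi> (shift p x)}"
    by (rule Compr_image_eq)
  also have "\<dots> = shift p ` {x \<in> {1..?n}. \<not> repeats (del_leg w p) (del_leg_part p \<pi>) x}"
    using repeats_del_leg[OF assms] by auto
  also have "\<dots> = shift p ` red_reps (del_leg w p) (del_leg_part p \<pi>)"
    unfolding red_reps_eq[OF inP_del_leg_part[OF assms(1-3,5)]] using assms(3) by simp
  finally show ?thesis .
qed

lemma rank_shift_image: "rank (shift p ` R) (shift p x) = rank R x"
proof -
  have "{y \<in> shift p ` R. y \<le> shift p x} = shift p ` {y \<in> R. y \<le> x}"
    by auto
  then show ?thesis
    unfolding rank_def by (simp add: card_image inj_on_subset[OF inj_shift])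
qed

lemma std_part_shift_image: "std_part (shift p ` R) ((`) (shift p) ` Q) = std_part R Q"
  unfolding std_part_eq_rank_image by (simp add: image_image rank_shift_image)

lemma restrict_part_shift_image:
  "restrict_part \<pi> (shift p ` R) = (`) (shift p) ` restrict_part (del_leg_part p \<pi>) R"
proof -
  have block: "B \<inter> shift p ` R = shift p ` (shift p -` B \<inter> R)" for B
    by auto
  have "restrict_part \<pi> (shift p ` R) = (\<lambda>B. B \<inter> shift p ` R) ` {B \<in> \<pi>. B \<inter> shift p ` R \<noteq> {}}"
    unfolding restrict_part_def by auto
  also have "\<dots> = (\<lambda>B. shift p ` (shift p -` B \<inter> R)) ` {B \<in> \<pi>. shift p ` (shift p -` B \<inter> R) \<noteq> {}}"
    unfolding block ..
  also have "\<dots> = (`) (shift p) ` restrict_part (del_leg_part p \<pi>) R"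
    unfolding restrict_part_def del_leg_part_def by auto
  finally show ?thesis .
qed

lemma admissible_del_repeated_leg:
  assumes "admissible \<alpha>" "inP w \<pi>" "1 \<le> p" "Suc p \<le> length w" "face w p = face w (Suc p)"
    "same_block \<pi> p (Suc p)"
  shows "\<alpha> w \<pi> = \<alpha> (del_leg w p) (del_leg_part p \<pi>)"
proof -
  let ?w = "del_leg w p" and ?\<pi> = "del_leg_part p \<pi>"
  let ?R = "red_reps ?w ?\<pi>"
  have reps: "red_reps w \<pi> = shift p ` ?R"
    by (rule red_reps_del_leg[OF assms(2-6)])
  have "finite ?R" "?R \<subseteq> {1..length ?w}"
    unfolding red_reps_def by auto
  then have "red_word w \<pi> = red_word ?w ?\<pi>"
    unfolding red_word_def std_word_def reps
    using sorted_list_of_set_image[OF _ strict_mono_on_shift]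
      face_del_leg[of p w] assms(4) by (auto simp: subset_iff)
  moreover have "red_part w \<pi> = red_part ?w ?\<pi>"
    unfolding red_part_def reps restrict_part_shift_image std_part_shift_image ..
  ultimately show ?thesis
    using admissible_reduce[OF assms(1,2)] admissible_reduce[OF assms(1) inP_del_leg_part[OF assms(2-4,6)]]
    by simp
qed

lemma del_leg_first: "2 \<le> length w \<Longrightarrow> del_leg (w[0 := w ! 1]) 1 = tl w"
  by (cases w; cases "tl w") (auto simp: del_leg_def)

lemma del_leg_last: "2 \<le> length w \<Longrightarrow> del_leg (w[length w - 1 := x]) (length w - 1) = butlast w"
  by (simp add: del_leg_def butlast_conv_take)

lemma
  assumes "inP w \<pi>" "2 \<le> length w" "same_block \<pi> 1 2"
  shows inP_del_first_leg: "inP (tl w) (del_leg_part 1 \<pi>)"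
    and card_del_first_leg: "card (del_leg_part 1 \<pi>) = card \<pi>"
  using inP_del_leg_part[of w \<pi> 1] card_del_leg_part[of w \<pi> 1] assms
    inP_cong_length[of "tl w" "del_leg w 1"]
  by (simp_all add: numeral_2_eq_2)

lemma
  assumes "inP w \<pi>" "2 \<le> length w" "same_block \<pi> (length w - 1) (length w)"
  shows inP_del_last_leg: "inP (butlast w) (del_leg_part (length w - 1) \<pi>)"
    and card_del_last_leg: "card (del_leg_part (length w - 1) \<pi>) = card \<pi>"
proof -
  have n: "Suc (length w - 1) = length w"
    using assms(2) by simp
  have p: "1 \<le> length w - 1" "Suc (length w - 1) \<le> length w"
    "same_block \<pi> (length w - 1) (Suc (length w - 1))"
    using assms(2,3) n by auto
  show "inP (butlast w) (del_leg_part (length w - 1) \<pi>)"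
    using inP_del_leg_part[OF assms(1) p] inP_cong_length[of "butlast w" "del_leg w (length w - 1)"]
      p(2) by simp
  show "card (del_leg_part (length w - 1) \<pi>) = card \<pi>"
    using card_del_leg_part[OF assms(1) p] .
qed

lemma admissible_del_first_leg:
  assumes "admissible \<alpha>" "inP w \<pi>" "2 \<le> length w" "same_block \<pi> 1 2"
  shows "\<alpha> w \<pi> = \<alpha> (tl w) (del_leg_part 1 \<pi>)"
proof -
  let ?v = "w[0 := w ! 1]"
  have "?v ! 0 = w ! 1" "?v ! 1 = w ! 1"
    using assms(3) by (cases w; simp)+
  have "\<alpha> w \<pi> = \<alpha> ?v \<pi>"
    using admissible_update_first_face[OF assms(1,2)] by simp
  also have "\<dots> = \<alpha> (del_leg ?v 1) (del_leg_part 1 \<pi>)"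
    by (rule admissible_del_repeated_leg)
      (use assms \<open>?v ! 0 = w ! 1\<close> \<open>?v ! 1 = w ! 1\<close> inP_cong_length[of ?v w]
        in \<open>auto simp: face_def numeral_2_eq_2\<close>)
  also have "del_leg ?v 1 = tl w"
    using del_leg_first[OF assms(3)] .
  finally show ?thesis .
qed

lemma admissible_del_last_leg:
  assumes "admissible \<alpha>" "inP w \<pi>" "2 \<le> length w" "same_block \<pi> (length w - 1) (length w)"
  shows "\<alpha> w \<pi> = \<alpha> (butlast w) (del_leg_part (length w - 1) \<pi>)"
proof -
  let ?v = "w[length w - 1 := w ! (length w - 2)]"
  have n: "Suc (length w - 1) = length w"
    using assms(3) by simp
  have "\<alpha> w \<pi> = \<alpha> ?v \<pi>"
    using admissible_update_last_face[OF assms(1,2)] by simp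
  also have "\<dots> = \<alpha> (del_leg ?v (length w - 1)) (del_leg_part (length w - 1) \<pi>)"
    by (rule admissible_del_repeated_leg)
      (use assms n inP_cong_length[of ?v w] in \<open>auto simp: face_def nth_list_update numeral_2_eq_2\<close>)
  also have "del_leg ?v (length w - 1) = butlast w"
    using del_leg_last[OF assms(3)] .
  finally show ?thesis .
qed

section \<open>Interval pairs and doubled legs\<close>

lemma ordered_pair_ends:
  assumes "inP w {P, Q}" "\<forall>x\<in>P. \<forall>y\<in>Q. x < y"
  shows "1 \<in> P" "length w \<in> Q" "2 \<le> length w"
proof -
  have cover: "P \<union> Q = {1..length w}"
    using assms(1) unfolding inP_def partition_on_def by simp
  obtain x y where "x \<in> P" "y \<in> Q"
    using inP_block_nonempty[OF assms(1)] by blast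
  then have "1 \<le> x" "x < y" "y \<le> length w"
    using cover assms(2) by auto
  then show "2 \<le> length w" by simp
  have "1 \<in> P \<union> Q" "length w \<in> P \<union> Q"
    using cover \<open>2 \<le> length w\<close> by auto
  moreover have "1 \<notin> Q" "length w \<notin> P"
    using assms(2) \<open>x \<in> P\<close> \<open>y \<in> Q\<close> \<open>1 \<le> x\<close> \<open>y \<le> length w\<close> leD by blast+
  ultimately show "1 \<in> P" "length w \<in> Q"
    by blast+
qed

lemma ordered_pair_two_legs:
  assumes "inP w {P, Q}" "\<forall>x\<in>P. \<forall>y\<in>Q. x < y" "length w = 2"
  shows "P = {1}" "Q = {2}"
proof -
  have "{1..2::nat} = {1, 2}"
    by (auto simp: numeral_2_eq_2)
  then have "P \<union> Q = {1, 2}"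
    using assms(1,3) unfolding inP_def partition_on_def by simp
  moreover have "1 \<in> P" "2 \<in> Q"
    using ordered_pair_ends[OF assms(1,2)] assms(3) by simp_all
  moreover from this have "1 \<notin> Q" "2 \<notin> P"
    using assms(2) by auto
  moreover have "P \<subseteq> P \<union> Q" "Q \<subseteq> P \<union> Q"
    by simp_all
  ultimately show "P = {1}" "Q = {2}"
    by auto
qed

lemma admissible_ordered_pair:
  assumes "admissible \<alpha>" "inP w {P, Q}" "P \<noteq> Q" "\<forall>x\<in>P. \<forall>y\<in>Q. x < y"
  shows "\<alpha> w {P, Q} = 1"
  using assms(2-4)
proof (induction "length w" arbitrary: w P Q rule: less_induct)
  case less
  let ?n = "length w"
  have "1 \<in> P" "?n \<in> Q" "2 \<le> ?n"
    using ordered_pair_ends[OF less.prems(1,3)] by simp_all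
  have shorter: "\<alpha> w {P, Q} = 1"
    if "\<alpha> w {P, Q} = \<alpha> v (del_leg_part p {P, Q})" "inP v (del_leg_part p {P, Q})"
      "card (del_leg_part p {P, Q}) = card {P, Q}" "length v < ?n" for v p
  proof -
    have "shift p -` P \<noteq> shift p -` Q"
      using that(3) less.prems(2) unfolding del_leg_part_def by (auto simp: card_insert_if)
    moreover have "\<forall>x\<in>shift p -` P. \<forall>y\<in>shift p -` Q. x < y"
      using less.prems(3) by fastforce
    ultimately show ?thesis
      using less.hyps[OF that(4)] that(1,2) unfolding del_leg_part_def by simp
  qed
  consider "2 \<in> P" | "?n = 2" | "2 \<notin> P" "?n \<noteq> 2"
    by blast
  then show ?case
  proof cases
    case 1
    then have "same_block {P, Q} 1 2"
      using \<open>1 \<in> P\<close> same_blockI[of P "{P, Q}"] by simp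
    then show ?thesis
      using shorter admissible_del_first_leg[OF assms(1) less.prems(1) \<open>2 \<le> ?n\<close>]
        inP_del_first_leg[OF less.prems(1) \<open>2 \<le> ?n\<close>] card_del_first_leg[OF less.prems(1) \<open>2 \<le> ?n\<close>]
        \<open>2 \<le> ?n\<close> by simp
  next
    case 2
    then show ?thesis
      using ordered_pair_two_legs[OF less.prems(1,3)] admissible_two_singletons[OF assms(1)] by simp
  next
    case 3
    have "2 \<in> P \<union> Q" "?n - 1 \<in> P \<union> Q"
      using less.prems(1) \<open>2 \<le> ?n\<close> unfolding inP_def partition_on_def by auto
    moreover have "\<not> ?n - 1 < 2"
      using 3 \<open>2 \<le> ?n\<close> by simp
    ultimately have "?n - 1 \<in> Q"
      using less.prems(3) 3 by blast
    then have "same_block {P, Q} (?n - 1) ?n"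
      using \<open>?n \<in> Q\<close> same_blockI[of Q "{P, Q}"] by simp
    then show ?thesis
      using shorter admissible_del_last_leg[OF assms(1) less.prems(1) \<open>2 \<le> ?n\<close>]
        inP_del_last_leg[OF less.prems(1) \<open>2 \<le> ?n\<close>] card_del_last_leg[OF less.prems(1) \<open>2 \<le> ?n\<close>]
        \<open>2 \<le> ?n\<close> by simp
  qed
qed

lemma admissible_std_ordered_pair:
  assumes "admissible \<alpha>" "inP f \<pi>" "B \<in> \<pi>" "C \<in> \<pi>" "B \<noteq> C" "\<forall>x\<in>B. \<forall>y\<in>C. x < y"
  shows "\<alpha> (std_word f (B \<union> C)) (std_part (B \<union> C) {B, C}) = 1"
proof -
  let ?S = "B \<union> C"
  have "finite ?S"
    using inP_block_subset[OF assms(2)] assms(3,4) by (meson finite_Un finite_atLeastAtMost finite_subset)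
  have "card (std_part ?S {B, C}) = 2"
    using card_std_part[OF \<open>finite ?S\<close> partition_on_pair_of_blocks[OF assms(2-5)]] assms(5) by simp
  then have "rank ?S ` B \<noteq> rank ?S ` C"
    unfolding std_part_eq_rank_image by (auto simp: card_insert_if)
  moreover have "\<forall>x\<in>rank ?S ` B. \<forall>y\<in>rank ?S ` C. x < y"
    using assms(6) rank_less[OF \<open>finite ?S\<close>] by blast
  ultimately show ?thesis
    using admissible_ordered_pair[OF assms(1)] inP_std_pair_of_blocks[OF assms(2-5)]
    unfolding std_part_eq_rank_image by simp
qed

text \<open>\<open>double_leg w p\<close> inserts a copy of leg \<open>p\<close> as the new leg \<open>Suc p\<close>; \<open>split_block p Z \<pi>\<close>
  cuts the block \<open>Z\<close> of leg \<open>p\<close> between \<open>p\<close> and its copy.\<close>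

definition double_leg :: "'a list \<Rightarrow> nat \<Rightarrow> 'a list" where
  "double_leg w p = take p w @ w ! (p - 1) # drop p w"

definition split_block :: "nat \<Rightarrow> nat set \<Rightarrow> nat set set \<Rightarrow> nat set set" where
  "split_block p Z \<pi> = insert (Z \<inter> {..p})
     (insert (insert (Suc p) (shift p ` (Z \<inter> {p<..}))) ((`) (shift p) ` (\<pi> - {Z})))"

lemma length_double_leg [simp]: "p \<le> length w \<Longrightarrow> length (double_leg w p) = Suc (length w)"
  unfolding double_leg_def by simp

lemma del_leg_double_leg [simp]: "p \<le> length w \<Longrightarrow> del_leg (double_leg w p) p = w"
  unfolding double_leg_def del_leg_def by simp

lemma face_double_leg_shift: "p \<le> length w \<Longrightarrow> 1 \<le> x \<Longrightarrow> face (double_leg w p) (shift p x) = face w x"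
  unfolding double_leg_def face_def shift_def by (auto simp: nth_append min_def nth_Cons')

lemma face_double_leg_copy: "1 \<le> p \<Longrightarrow> p \<le> length w \<Longrightarrow> face (double_leg w p) (Suc p) = face w p"
  unfolding double_leg_def face_def by (simp add: nth_append min_def)

lemma split_block_eq:
  "split_block p Z \<pi> = insert (insert (Suc p) (shift p ` (Z \<inter> {p<..})))
     ((`) (shift p) ` insert (Z \<inter> {..p}) (\<pi> - {Z}))"
  unfolding split_block_def image_insert shift_image_atMost by (simp only: insert_commute)

lemma inP_split_block:
  assumes "inP w \<pi>" "Z \<in> \<pi>" "p \<in> Z"
  shows "inP (double_leg w p) (split_block p Z \<pi>)"
proof -
  let ?n = "length w" and ?Z' = "Z \<inter> {p<..}"
  have p: "1 \<le> p" "p \<le> ?n"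
    using inP_block_subset[OF assms(1,2)] assms(3) by auto
  have "?Z' \<union> ({1..?n} - ?Z') = {1..?n}"
    using inP_block_subset[OF assms(1,2)] by auto
  then have legs: "insert (Suc p) (shift p ` ?Z') \<union> shift p ` ({1..?n} - ?Z') = {1..Suc ?n}"
    using shift_image_atLeastAtMost[OF p(2)] p by (simp add: image_Un[symmetric] insert_absorb)
  have "Z - ?Z' = Z \<inter> {..p}"
    by auto
  then have "partition_on ({1..?n} - ?Z') (insert (Z \<inter> {..p}) (\<pi> - {Z}))"
    using partition_on_shrink_block[of "{1..?n}" \<pi> Z ?Z'] assms unfolding inP_def by auto
  moreover have "disjnt (insert (Suc p) (shift p ` ?Z')) (shift p ` ({1..?n} - ?Z'))"
    unfolding disjnt_def by auto
  ultimately have "partition_on {1..Suc ?n} (split_block p Z \<pi>)"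
    unfolding split_block_eq legs[symmetric] using partition_on_insert_image inj_shift by blast
  then show ?thesis
    unfolding inP_def using p by simp
qed

definition double_leg_part :: "nat \<Rightarrow> nat set \<Rightarrow> nat set set \<Rightarrow> nat set set" where
  "double_leg_part p Z \<pi> = insert (insert (Suc p) (shift p ` Z)) ((`) (shift p) ` (\<pi> - {Z}))"

lemma del_leg_part_double_leg_part: "Z \<in> \<pi> \<Longrightarrow> del_leg_part p (double_leg_part p Z \<pi>) = \<pi>"
proof -
  assume "Z \<in> \<pi>"
  have "shift p -` insert (Suc p) (shift p ` Z) = shift p -` shift p ` Z"
    by auto
  then show ?thesis
    using \<open>Z \<in> \<pi>\<close> unfolding del_leg_part_def double_leg_part_def image_insert image_image
    by (simp add: inj_vimage_image_eq[OF inj_shift] insert_absorb)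
qed

lemma merge_split_block:
  assumes "inP w \<pi>" "Z \<in> \<pi>" "p \<in> Z"
  shows "merge (split_block p Z \<pi>) (Z \<inter> {..p}) (insert (Suc p) (shift p ` (Z \<inter> {p<..}))) =
    double_leg_part p Z \<pi>"
proof -
  define B where "B = Z \<inter> {..p}"
  define C where "C = insert (Suc p) (shift p ` (Z \<inter> {p<..}))"
  define R where "R = (`) (shift p) ` (\<pi> - {Z})"
  have "B \<notin> R"
  proof
    assume "B \<in> R"
    then obtain D where "D \<in> \<pi> - {Z}" "B = shift p ` D"
      unfolding R_def by blast
    moreover have "shift p p \<in> B"
      unfolding B_def using assms(3) by simp
    ultimately have "p \<in> D"
      by (simp only: inj_image_mem_iff[OF inj_shift])
    then show False
      using \<open>D \<in> \<pi> - {Z}\<close> assms(2,3) inP_block_unique[OF assms(1)] by blast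
  qed
  moreover have "C \<notin> R"
    using shift_neq_Suc(2)[of p] unfolding C_def R_def by blast
  ultimately have "insert B (insert C R) - {B, C} = R"
    by blast
  moreover have "shift p ` Z = B \<union> shift p ` (Z \<inter> {p<..})"
  proof -
    have "Z = Z \<inter> {..p} \<union> Z \<inter> {p<..}"
      by auto
    then show ?thesis
      unfolding B_def by (metis image_Un shift_image_atMost)
  qed
  ultimately show ?thesis
    unfolding split_block_def double_leg_part_def merge_def B_def [symmetric] C_def [symmetric]
      R_def [symmetric] by (simp add: C_def)
qed

lemma admissible_split_block:
  assumes "admissible \<alpha>" "inP w \<pi>" "Z \<in> \<pi>" "p \<in> Z"
  shows "\<alpha> w \<pi> = \<alpha> (double_leg w p) (split_block p Z \<pi>)"
proof -
  define B where "B = Z \<inter> {..p}"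
  define C where "C = insert (Suc p) (shift p ` (Z \<inter> {p<..}))"
  let ?h = "double_leg w p" and ?\<rho> = "split_block p Z \<pi>" and ?\<sigma> = "double_leg_part p Z \<pi>"
  have p: "1 \<le> p" "p \<le> length w"
    using inP_block_subset[OF assms(2,3)] assms(4) by auto
  have inP_\<rho>: "inP ?h ?\<rho>"
    by (rule inP_split_block[OF assms(2-4)])
  have "B \<in> ?\<rho>" "C \<in> ?\<rho>"
    unfolding split_block_def B_def C_def by simp_all
  have "p \<in> B" "Suc p \<in> C"
    unfolding B_def C_def using assms(4) by auto
  have B_before_C: "\<forall>x\<in>B. \<forall>y\<in>C. x < y"
    unfolding B_def C_def by (auto simp: shift_def)
  then have "B \<noteq> C"
    using \<open>p \<in> B\<close> by blast
  have \<sigma>: "merge ?\<rho> B C = ?\<sigma>"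
    unfolding B_def C_def by (rule merge_split_block[OF assms(2-4)])
  have faces: "face ?h p = face ?h (Suc p)"
    using face_double_leg_shift[of p w p] face_double_leg_copy[OF p] p by simp
  have "\<alpha> ?h ?\<rho> = \<alpha> ?h ?\<sigma> * \<alpha> (std_word ?h (B \<union> C)) (std_part (B \<union> C) {B, C})"
    using admissible_merge[OF assms(1) inP_\<rho> \<open>B \<in> ?\<rho>\<close> \<open>C \<in> ?\<rho>\<close> \<open>B \<noteq> C\<close> \<open>p \<in> B\<close> \<open>Suc p \<in> C\<close> faces]
    unfolding \<sigma> .
  also have "\<alpha> (std_word ?h (B \<union> C)) (std_part (B \<union> C) {B, C}) = 1"
    by (rule admissible_std_ordered_pair[OF assms(1) inP_\<rho> \<open>B \<in> ?\<rho>\<close> \<open>C \<in> ?\<rho>\<close> \<open>B \<noteq> C\<close> B_before_C])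
  also have "\<alpha> ?h ?\<sigma> = \<alpha> (del_leg ?h p) (del_leg_part p ?\<sigma>)"
  proof (rule admissible_del_repeated_leg[OF assms(1) _ p(1) _ faces])
    show "inP ?h ?\<sigma>"
      using inP_merge[OF inP_\<rho> \<open>B \<in> ?\<rho>\<close> \<open>C \<in> ?\<rho>\<close>] unfolding \<sigma> .
    show "same_block ?\<sigma> p (Suc p)"
      by (rule same_blockI[of "insert (Suc p) (shift p ` Z)"]) (use assms(4) image_eqI[of p "shift p" p Z] in \<open>auto simp: double_leg_part_def\<close>)
  qed (use p in simp)
  finally show ?thesis
    using del_leg_part_double_leg_part[OF assms(3)] p(2) by simp
qed

section \<open>Reduction to two blocks on at most four legs\<close>

lemma admissible_merge_first_legs:
  assumes "admissible \<alpha>" "inP w \<pi>" "X \<in> \<pi>" "Y \<in> \<pi>" "X \<noteq> Y" "1 \<in> X" "2 \<in> Y"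
  shows "\<alpha> w \<pi> = \<alpha> (w[0 := w ! 1]) (merge \<pi> X Y) *
    \<alpha> (std_word (w[0 := w ! 1]) (X \<union> Y)) (std_part (X \<union> Y) {X, Y})"
proof -
  let ?v = "w[0 := w ! 1]"
  have "2 \<le> length w"
    using inP_block_subset[OF assms(2,4)] assms(7) by auto
  then have "face ?v 1 = face ?v (Suc 1)"
    unfolding face_def by (cases w; simp)
  moreover have "inP ?v \<pi>"
    using assms(2) inP_cong_length[of ?v w] by simp
  ultimately have "\<alpha> ?v \<pi> = \<alpha> ?v (merge \<pi> X Y) * \<alpha> (std_word ?v (X \<union> Y)) (std_part (X \<union> Y) {X, Y})"
    using admissible_merge[OF assms(1) _ assms(3-6)] assms(7) by (simp add: numeral_2_eq_2)
  then show ?thesis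
    using admissible_update_first_face[OF assms(1,2)] by simp
qed

lemma three_block_factorisation:
  assumes "inP h {A, B, C}" "A \<noteq> B" "A \<noteq> C" "B \<noteq> C"
    and "{X, Y} = {A, B}" "1 \<in> X" "2 \<in> Y" "3 \<in> A \<union> B" "2 \<le> card C"
  obtains w1 \<pi>1 w2 \<pi>2 where "inP w1 \<pi>1" "length w1 + 2 = length h"
    "inP w2 \<pi>2" "length w2 + 2 \<le> length h"
    "\<And>\<alpha>. admissible \<alpha> \<Longrightarrow> \<alpha> h {A, B, C} = \<alpha> w1 \<pi>1 * \<alpha> w2 \<pi>2"
proof -
  have "X \<in> {A, B, C}" "Y \<in> {A, B, C}" "X \<noteq> Y" "X \<union> Y = A \<union> B" "C \<noteq> X" "C \<noteq> Y"
    using assms(2-5) by (auto simp: doubleton_eq_iff)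
  define h' where "h' = h[0 := h ! 1]"
  define M where "M = merge {A, B, C} X Y"
  have M: "M = {A \<union> B, C}"
    using assms(5) \<open>C \<noteq> X\<close> \<open>C \<noteq> Y\<close> \<open>X \<union> Y = A \<union> B\<close> unfolding M_def merge_def by auto
  have merge_step: "\<And>\<alpha>. admissible \<alpha> \<Longrightarrow>
      \<alpha> h {A, B, C} = \<alpha> h' M * \<alpha> (std_word h' (X \<union> Y)) (std_part (X \<union> Y) {X, Y})"
    unfolding h'_def M_def
    using admissible_merge_first_legs[OF _ assms(1) \<open>X \<in> _\<close> \<open>Y \<in> _\<close> \<open>X \<noteq> Y\<close> assms(6,7)] .
  have "3 \<le> length h"
    using inP_block_subset[OF assms(1)] assms(8) by fastforce
  then have "length h' = length h" "2 \<le> length h'" "2 \<le> length (tl h')"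
    unfolding h'_def by simp_all
  then have inP_h': "inP h' {A, B, C}"
    using assms(1) inP_cong_length by blast
  have "same_block M 1 2" "same_block M 1 3"
    using assms(6-8) \<open>X \<union> Y = A \<union> B\<close> unfolding M by (auto intro: same_blockI)
  define M1 where "M1 = del_leg_part 1 M"
  have "inP h' M"
    unfolding M_def by (rule inP_merge[OF inP_h' \<open>X \<in> _\<close> \<open>Y \<in> _\<close>])
  then have inP_M1: "inP (tl h') M1" and drop1: "\<And>\<alpha>. admissible \<alpha> \<Longrightarrow> \<alpha> h' M = \<alpha> (tl h') M1"
    unfolding M1_def using inP_del_first_leg admissible_del_first_leg \<open>2 \<le> length h'\<close>
      \<open>same_block M 1 2\<close> by blast+
  have "same_block M1 1 2"
    unfolding M1_def same_block_del_leg_part using \<open>same_block M 1 3\<close> by (simp add: shift_def)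
  then have inP_M2: "inP (tl (tl h')) (del_leg_part 1 M1)"
    and drop2: "\<And>\<alpha>. admissible \<alpha> \<Longrightarrow> \<alpha> (tl h') M1 = \<alpha> (tl (tl h')) (del_leg_part 1 M1)"
    using inP_del_first_leg[OF inP_M1] admissible_del_first_leg[OF _ inP_M1] \<open>2 \<le> length (tl h')\<close>
    by blast+
  show ?thesis
  proof
    show "inP (tl (tl h')) (del_leg_part 1 M1)" by (rule inP_M2)
    show "length (tl (tl h')) + 2 = length h"
      using \<open>length h' = length h\<close> \<open>3 \<le> length h\<close> by simp
    show "inP (std_word h' (X \<union> Y)) (std_part (X \<union> Y) {X, Y})"
      by (rule inP_std_pair_of_blocks[OF inP_h' \<open>X \<in> _\<close> \<open>Y \<in> _\<close> \<open>X \<noteq> Y\<close>])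
    show "length (std_word h' (X \<union> Y)) + 2 \<le> length h"
      using card_Un_blocks_add_le[OF inP_h' \<open>X \<in> _\<close> \<open>Y \<in> _\<close>, of C] \<open>C \<noteq> X\<close> \<open>C \<noteq> Y\<close>
        \<open>length h' = length h\<close> assms(9) by simp
    show "\<alpha> h {A, B, C} = \<alpha> (tl (tl h')) (del_leg_part 1 M1) * \<alpha> (std_word h' (X \<union> Y)) (std_part (X \<union> Y) {X, Y})"
      if "admissible \<alpha>" for \<alpha>
      using merge_step[OF that] drop1[OF that] drop2[OF that] by simp
  qed
qed

lemma first_blocks_factorisation:
  assumes "inP w \<pi>" "3 \<le> card \<pi>" "\<not> same_block \<pi> 1 2"
  obtains v \<sigma> u \<tau> where "inP v \<sigma>" "length v = length w" "card \<sigma> < card \<pi>"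
    "inP u \<tau>" "length u < length w" "\<And>\<alpha>. admissible \<alpha> \<Longrightarrow> \<alpha> w \<pi> = \<alpha> v \<sigma> * \<alpha> u \<tau>"
proof -
  have "1 \<in> {1..length w}" "2 \<in> {1..length w}"
    using card_inP_le_length[OF assms(1)] assms(2) by auto
  then obtain X Y where "X \<in> \<pi>" "Y \<in> \<pi>" "1 \<in> X" "2 \<in> Y"
    using inP_ex_block[OF assms(1)] by metis
  moreover from this have "X \<noteq> Y"
    using assms(3) same_blockI by blast
  moreover define v where "v = w[0 := w ! 1]"
  moreover from this have "length v = length w" and inP_v: "inP v \<pi>"
    using assms(1) inP_cong_length[of v w] by simp_all
  ultimately show ?thesis
    using that[OF inP_merge[OF inP_v] _ _ inP_std_pair_of_blocks[OF inP_v]]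
      card_merge[OF inP_v] card_Un_two_blocks_less[OF assms(1,2)] assms(2)
      admissible_merge_first_legs[OF _ assms(1)]
    by simp
qed

lemma two_block_legs:
  assumes "inP w \<pi>" "card \<pi> = 2" "5 \<le> length w"
    and "\<not> same_block \<pi> 1 2" "\<not> same_block \<pi> (length w - 1) (length w)"
  obtains W Z z where "\<pi> = {W, Z}" "W \<noteq> Z" "W \<inter> Z = {}" "3 \<in> Z" "z \<in> Z" "3 < z"
    "1 \<in> W \<and> 2 \<in> Z \<or> 1 \<in> Z \<and> 2 \<in> W"
proof -
  let ?n = "length w"
  obtain Z where Z: "Z \<in> \<pi>" "3 \<in> Z"
    using inP_ex_block[OF assms(1), of 3] assms(3) by auto
  obtain W where \<pi>: "\<pi> = {W, Z}" "W \<noteq> Z"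
    using assms(2) Z(1) by (metis card_2_iff insert_commute insertE singletonD)
  have cover: "W \<union> Z = {1..?n}"
    using assms(1) unfolding \<pi> inP_def partition_on_def by simp
  have separated: "x \<in> W \<and> y \<in> Z \<or> x \<in> Z \<and> y \<in> W"
    if "x \<in> {1..?n}" "y \<in> {1..?n}" "\<not> same_block \<pi> x y" for x y
    using that cover unfolding \<pi> same_block_def by blast
  have "?n - 1 \<in> Z \<or> ?n \<in> Z"
    using separated[OF _ _ assms(5)] assms(3) by auto
  moreover have "3 < ?n - 1" "3 < ?n"
    using assms(3) by auto
  ultimately obtain z where "z \<in> Z" "3 < z"
    by blast
  moreover have "W \<inter> Z = {}"
    using inP_block_unique[OF assms(1), of W Z] \<pi> by auto
  moreover have "1 \<in> W \<and> 2 \<in> Z \<or> 1 \<in> Z \<and> 2 \<in> W"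
    using separated[of 1 2] assms(3,4) by simp
  ultimately show ?thesis
    using that \<pi> Z(2) by blast
qed

lemma two_block_factorisation:
  assumes "inP w \<pi>" "card \<pi> = 2" "5 \<le> length w"
    and "\<not> same_block \<pi> 1 2" "\<not> same_block \<pi> (length w - 1) (length w)"
  obtains w1 \<pi>1 w2 \<pi>2 where "inP w1 \<pi>1" "length w1 < length w" "inP w2 \<pi>2" "length w2 < length w"
    "\<And>\<alpha>. admissible \<alpha> \<Longrightarrow> \<alpha> w \<pi> = \<alpha> w1 \<pi>1 * \<alpha> w2 \<pi>2"
proof -
  obtain W Z z where \<pi>: "\<pi> = {W, Z}" "W \<noteq> Z" and "W \<inter> Z = {}" "3 \<in> Z" "z \<in> Z" "3 < z"
    and first_legs: "1 \<in> W \<and> 2 \<in> Z \<or> 1 \<in> Z \<and> 2 \<in> W"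
    by (rule two_block_legs[OF assms])
  have Z: "Z \<in> \<pi>" "3 \<in> Z"
    using \<pi>(1) \<open>3 \<in> Z\<close> by simp_all
  define A where "A = shift 3 ` W"
  define B where "B = Z \<inter> {..3}"
  define C where "C = insert 4 (shift 3 ` (Z \<inter> {3<..}))"
  have "\<pi> - {Z} = {W}"
    using \<pi> by auto
  then have "split_block 3 Z \<pi> = {B, C, A}"
    unfolding split_block_def A_def B_def C_def by (simp add: numeral_eq_Suc)
  then have inP_h: "inP (double_leg w 3) {A, B, C}"
    and split: "\<And>\<alpha>. admissible \<alpha> \<Longrightarrow> \<alpha> w \<pi> = \<alpha> (double_leg w 3) {A, B, C}"
    using inP_split_block[OF assms(1) Z] admissible_split_block[OF _ assms(1) Z]
    by (simp_all add: insert_commute)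
  have "3 \<in> B" "4 \<in> C" "shift 3 z \<in> C" "shift 3 z \<noteq> 4"
    unfolding B_def C_def using \<open>3 \<in> Z\<close> \<open>z \<in> Z\<close> \<open>3 < z\<close> by (auto simp: shift_def)
  have A_legs: "x \<in> A \<longleftrightarrow> x \<in> W" and B_legs: "x \<in> B \<longleftrightarrow> x \<in> Z" if "x \<le> 3" for x
    unfolding A_def B_def using that by (auto simp: image_iff shift_def)
  have "3 \<notin> A" "4 \<notin> A" "4 \<notin> B"
    using A_legs[of 3] \<open>3 \<in> Z\<close> \<open>W \<inter> Z = {}\<close> unfolding A_def B_def by (auto simp: shift_def)
  then have "A \<noteq> B" "A \<noteq> C" "B \<noteq> C"
    using \<open>3 \<in> B\<close> \<open>4 \<in> C\<close> by auto
  from first_legs have "1 \<in> A \<and> 2 \<in> B \<or> 1 \<in> B \<and> 2 \<in> A"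
    using A_legs B_legs by simp
  then obtain X Y where XY: "{X, Y} = {A, B}" "1 \<in> X" "2 \<in> Y"
    by (metis insert_commute)
  have "card C \<ge> 2"
  proof -
    have "finite C"
      using inP_block_subset[OF inP_h, of C] finite_subset by auto
    then show ?thesis
      using card_mono[of C "{4, shift 3 z}"] \<open>4 \<in> C\<close> \<open>shift 3 z \<in> C\<close> \<open>shift 3 z \<noteq> 4\<close> by auto
  qed
  obtain w1 \<pi>1 w2 \<pi>2 where "inP w1 \<pi>1" "length w1 + 2 = length (double_leg w 3)" "inP w2 \<pi>2"
    "length w2 + 2 \<le> length (double_leg w 3)"
    "\<And>\<alpha>. admissible \<alpha> \<Longrightarrow> \<alpha> (double_leg w 3) {A, B, C} = \<alpha> w1 \<pi>1 * \<alpha> w2 \<pi>2"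
    using three_block_factorisation[OF inP_h \<open>A \<noteq> B\<close> \<open>A \<noteq> C\<close> \<open>B \<noteq> C\<close> XY _ \<open>card C \<ge> 2\<close>] \<open>3 \<in> B\<close>
    by blast
  moreover have "length (double_leg w 3) = Suc (length w)"
    using assms(3) by simp
  ultimately show ?thesis
    using that[of w1 \<pi>1 w2 \<pi>2] split by simp
qed

lemma admissible_eq_induct_step:
  assumes "admissible \<alpha>" "admissible \<beta>"
    and base: "\<And>f \<tau>. inP f \<tau> \<Longrightarrow> length f \<le> 4 \<Longrightarrow> card \<tau> = 2 \<Longrightarrow> \<alpha> f \<tau> = \<beta> f \<tau>"
    and shorter: "\<And>v \<tau>. inP v \<tau> \<Longrightarrow> length v < length w \<Longrightarrow> \<alpha> v \<tau> = \<beta> v \<tau>"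
    and fewer_blocks: "\<And>v \<tau>. inP v \<tau> \<Longrightarrow> length v = length w \<Longrightarrow> card \<tau> < card \<pi> \<Longrightarrow> \<alpha> v \<tau> = \<beta> v \<tau>"
    and "inP w \<pi>"
  shows "\<alpha> w \<pi> = \<beta> w \<pi>"
proof -
  let ?n = "length w"
  note inP = \<open>inP w \<pi>\<close>
  consider (one_block) "card \<pi> = 1" | (small) "card \<pi> = 2" "?n \<le> 4"
    | (first_legs) "2 \<le> card \<pi>" "same_block \<pi> 1 2"
    | (first_blocks) "3 \<le> card \<pi>" "\<not> same_block \<pi> 1 2"
    | (last_legs) "card \<pi> = 2" "5 \<le> ?n" "same_block \<pi> (?n - 1) ?n"
    | (generic) "card \<pi> = 2" "5 \<le> ?n" "\<not> same_block \<pi> 1 2" "\<not> same_block \<pi> (?n - 1) ?n"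
    using card_inP_pos[OF inP] by linarith
  then show ?thesis
  proof cases
    case one_block
    then show ?thesis
      using inP_card_one[OF inP] admissible_one_block[OF assms(1)] admissible_one_block[OF assms(2)] inP
      unfolding inP_def by simp
  next
    case small
    then show ?thesis using base inP by blast
  next
    case first_legs
    then have "2 \<le> ?n" using card_inP_le_length[OF inP] by simp
    have "\<alpha> (tl w) (del_leg_part 1 \<pi>) = \<beta> (tl w) (del_leg_part 1 \<pi>)"
      by (rule shorter[OF inP_del_first_leg[OF inP \<open>2 \<le> ?n\<close> first_legs(2)]]) (use \<open>2 \<le> ?n\<close> in simp)
    then show ?thesis
      using admissible_del_first_leg[OF assms(1) inP \<open>2 \<le> ?n\<close> first_legs(2)]
        admissible_del_first_leg[OF assms(2) inP \<open>2 \<le> ?n\<close> first_legs(2)] by simp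
  next
    case first_blocks
    obtain v \<sigma> u \<tau> where "inP v \<sigma>" "length v = ?n" "card \<sigma> < card \<pi>" "inP u \<tau>" "length u < ?n"
      "\<And>\<gamma>. admissible \<gamma> \<Longrightarrow> \<gamma> w \<pi> = \<gamma> v \<sigma> * \<gamma> u \<tau>"
      using first_blocks_factorisation[OF inP first_blocks] by blast
    then show ?thesis
      using fewer_blocks shorter assms(1,2) by metis
  next
    case last_legs
    then have "2 \<le> ?n" by simp
    have "\<alpha> (butlast w) (del_leg_part (?n - 1) \<pi>) = \<beta> (butlast w) (del_leg_part (?n - 1) \<pi>)"
      by (rule shorter[OF inP_del_last_leg[OF inP \<open>2 \<le> ?n\<close> last_legs(3)]]) (use \<open>2 \<le> ?n\<close> in simp)
    then show ?thesis
      using admissible_del_last_leg[OF assms(1) inP \<open>2 \<le> ?n\<close> last_legs(3)]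
        admissible_del_last_leg[OF assms(2) inP \<open>2 \<le> ?n\<close> last_legs(3)] by simp
  next
    case generic
    then obtain w1 \<pi>1 w2 \<pi>2 where "inP w1 \<pi>1" "length w1 < ?n" "inP w2 \<pi>2" "length w2 < ?n"
      "\<And>\<gamma>. admissible \<gamma> \<Longrightarrow> \<gamma> w \<pi> = \<gamma> w1 \<pi>1 * \<gamma> w2 \<pi>2"
      using two_block_factorisation[OF inP] by blast
    then show ?thesis
      using shorter assms(1,2) by metis
  qed
qed

lemma admissible_eq_if_eq_on_small_two_block:
  assumes "admissible \<alpha>" "admissible \<beta>"
    and base: "\<And>f \<tau>. inP f \<tau> \<Longrightarrow> length f \<le> 4 \<Longrightarrow> card \<tau> = 2 \<Longrightarrow> \<alpha> f \<tau> = \<beta> f \<tau>"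
    and "inP w \<pi>"
  shows "\<alpha> w \<pi> = \<beta> w \<pi>"
  using assms(4)
proof (induction "length w" arbitrary: w \<pi> rule: less_induct)
  case less
  note shorter = less.hyps
  have "\<alpha> v \<tau> = \<beta> v \<tau>" if "inP v \<tau>" "length v = length w" for v \<tau>
    using that
  proof (induction "card \<tau>" arbitrary: v \<tau> rule: less_induct)
    case less
    show ?case
    proof (rule admissible_eq_induct_step[OF assms(1,2)])
      show "\<alpha> f \<tau>' = \<beta> f \<tau>'" if "inP f \<tau>'" "length f \<le> 4" "card \<tau>' = 2" for f \<tau>'
        using base that by blast
      show "\<alpha> u \<tau>' = \<beta> u \<tau>'" if "inP u \<tau>'" "length u < length v" for u \<tau>'
        using shorter that less.prems(2) by simp
      show "\<alpha> u \<tau>' = \<beta> u \<tau>'" if "inP u \<tau>'" "length u = length v" "card \<tau>' < card \<tau>" for u \<tau>'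
        using less.hyps that less.prems(2) by simp
    qed (rule less.prems(1))
  qed
  then show ?case
    using less.prems by blast
qed

theorem corollary6p4:
  fixes \<alpha> \<beta> :: "'f::finite list \<Rightarrow> nat set set \<Rightarrow> complex"
  assumes "admissible \<alpha>" and "admissible \<beta>"
  shows "(\<forall>f \<pi>. inP f \<pi> \<longrightarrow> \<alpha> f \<pi> = \<beta> f \<pi>) \<longleftrightarrow>
         (\<forall>f \<pi>. inP f \<pi> \<and> length f \<le> 4 \<and> card \<pi> = 2 \<longrightarrow> \<alpha> f \<pi> = \<beta> f \<pi>)"
  using admissible_eq_if_eq_on_small_two_block[OF assms] by blast

end
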